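(* Let $Q_{n,m}$ be as defined in the context and let $S$ be a nonzero subspace of $V(Q_{n,m})$. Then every coloring of the induced subgraph $Q_{n,m}|_S$ contains a code of dimension at most $\left\lceil (\dim(S^\perp)+1)/m\right\rceil$, where $S^\perp$ is the orthogonal complement of $S$ in $V(Q_{n,m})$.
   Context: A quantum graph $G$ consists of a finite-dimensional complex inner product space $V(G)$ and a real vector space $E(G)$ of self-adjoint operators on $V(G)$ containing the identity $I$; write $|G|=\dim V(G)$ and $\|G\|=\dim E(G)-1$. A code of $G$ is a subspace $C\subseteq V(G)$ such that there is a function $\epsilon_C:E(G)\to\mathbb{R}$ with $P_CAP_C=\epsilon_C(A)P_C$ for all $A\in E(G)$, where $P_C$ is the orthogonal projection onto $C$. A coloring of $G$ is a set $K$ of codes of $G$ with $\sum_{C\in K}P_C=I$. For a subspace $S\subseteq V(G)$, the induced subgraph $G|_S$ is the quantum graph with $V(G|_S)=S$ and $E(G|_S)=P_SE(G)P_S$ (operators restricted to $S$). Let $n\ge 2$ and $1\le m\le n-1$ be integers. $Q_{n,m}$ denotes any quantum graph with $|Q_{n,m}|=n$, $\|Q_{n,m}\|=m$, such that: (i) $E(Q_{n,m})$ is commutative; (ii) (tropical) $E(Q_{n,m})$ has a basis $\{I,A_1,\dots,A_m\}$ and there is an orthonormal basis of $V(Q_{n,m})$ of common eigenvectors of the $A_i$ such that, writing the eigenvalues of $A_i$ in decreasing order $\lambda_{i,1},\dots,\lambda_{i,n}$ with corresponding common eigenvectors $w_{i,1},\dots,w_{i,n}$, one has $0<\lambda_{i,j+1}<\lambda_{i,j}/n^2$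 for all $i$ and $1\le j<n$; (iii) (cyclical) for $1\le i<m$ and all $j$, $w_{i+1,j}=w_{i,j+s_i}$, with the second index taken modulo $n$ in $\{1,\dots,n\}$, where $s_i=\lfloor n/m\rfloor+1$ if $1\le i\le (n\bmod m)$ and $s_i=\lfloor n/m\rfloor$ otherwise; (iv) the common eigenvectors are enumerated as $w_1,\dots,w_n$ (each common eigenvector exactly once) so that for every $l\in\{1,\dots,n\}$ one has $w_l=w_{i,\lceil l/m\rceil}$ for some $i\in\{1,\dots,m\}$. *)

theory Defs
  imports "Jordan_Normal_Form.VS_Connect" "Jordan_Normal_Form.Conjugate"
begin

(* Ambient space: V = C^n (complex vec of dimension n) with the standard
   inner product  v \<bullet>c w = \<Sum>i. v_i * cnj (w_i).  Operators: n x n complex matrices. *)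

definition csubspace :: "nat \<Rightarrow> complex vec set \<Rightarrow> bool" where
  "csubspace n W \<longleftrightarrow> subspace class_ring W (module_vec TYPE(complex) n)"

definition cdim :: "nat \<Rightarrow> complex vec set \<Rightarrow> nat" where
  "cdim n W = vectorspace.dim class_ring ((module_vec TYPE(complex) n)\<lparr>carrier := W\<rparr>)"

definition perp :: "nat \<Rightarrow> complex vec set \<Rightarrow> complex vec set" where
  "perp n S = {x \<in> carrier_vec n. \<forall>y\<in>S. x \<bullet>c y = 0}"

definition proj :: "nat \<Rightarrow> complex vec set \<Rightarrow> complex mat" where
  "proj n W = (THE P. P \<in> carrier_mat n n \<and>
      (\<forall>v\<in>carrier_vec n. P *\<^sub>v v \<in> W \<and> (\<forall>w\<in>W. (v - P *\<^sub>v v) \<bullet>c w = 0)))"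

definition adj :: "complex mat \<Rightarrow> complex mat" where
  "adj A = mat (dim_col A) (dim_row A) (\<lambda>(i,j). cnj (A $$ (j,i)))"

(* A quantum graph is represented inside C^n: its vertex space is a subspace W of C^n
   and its edge space E is a set of n x n matrices (operators on W, extended by 0 on W^perp);
   the identity of W is then proj n W. *)

definition is_code :: "nat \<Rightarrow> complex vec set \<Rightarrow> complex mat set \<Rightarrow> complex vec set \<Rightarrow> bool" where
  "is_code n W E C \<longleftrightarrow> csubspace n C \<and> C \<subseteq> W \<and>
     (\<exists>\<epsilon> :: complex mat \<Rightarrow> real. \<forall>A\<in>E.
        proj n C * A * proj n C = complex_of_real (\<epsilon> A) \<cdot>\<^sub>m proj n C)"

definition is_coloring :: "nat \<Rightarrow> complex vec set \<Rightarrow> complex mat set \<Rightarrow> complex vec set set \<Rightarrow> bool" where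
  "is_coloring n W E K \<longleftrightarrow> finite K \<and> (\<forall>C\<in>K. is_code n W E C) \<and>
     (\<forall>i<n. \<forall>j<n. (\<Sum>C\<in>K. proj n C $$ (i,j)) = proj n W $$ (i,j))"

definition induced_edges :: "nat \<Rightarrow> complex vec set \<Rightarrow> complex mat set \<Rightarrow> complex mat set" where
  "induced_edges n S E = (\<lambda>A. proj n S * A * proj n S) ` E"

definition lin_comb :: "nat \<Rightarrow> nat \<Rightarrow> (nat \<Rightarrow> complex mat) \<Rightarrow> (nat \<Rightarrow> real) \<Rightarrow> complex mat" where
  "lin_comb n m A c = mat n n (\<lambda>(i,j). complex_of_real (c 0) * (if i = j then 1 else 0)
       + (\<Sum>k\<in>{1..m}. complex_of_real (c k) * A k $$ (i,j)))"

definition edge_space :: "nat \<Rightarrow> nat \<Rightarrow> (nat \<Rightarrow> complex mat) \<Rightarrow> complex mat set" where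
  "edge_space n m A = {lin_comb n m A c | c. True}"

definition shift :: "nat \<Rightarrow> nat \<Rightarrow> nat \<Rightarrow> nat" where
  "shift n m i = (if 1 \<le> i \<and> i \<le> n mod m then n div m + 1 else n div m)"

(* Q_{n,m}: vertex space C^n, edge space = real span of {I, A_1..A_m}, with
   {I, A_1..A_m} a basis (real linear independence), conditions (i)-(iv).
   b : orthonormal basis b 1..b n of common eigenvectors;
   w_{i,j} = b (\<pi> i j) with \<pi> i a permutation of {1..n};  lam i j = \<lambda>_{i,j}. *)
definition is_Q :: "nat \<Rightarrow> nat \<Rightarrow> (nat \<Rightarrow> complex mat) \<Rightarrow> bool" where
  "is_Q n m A \<longleftrightarrow>
     (\<forall>k\<in>{1..m}. A k \<in> carrier_mat n n) \<and>
     (\<forall>X\<in>edge_space n m A. adj X = X) \<and>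
     (\<forall>c. lin_comb n m A c = 0\<^sub>m n n \<longrightarrow> (\<forall>k\<le>m. c k = 0)) \<and>
     (\<forall>X\<in>edge_space n m A. \<forall>Y\<in>edge_space n m A. X * Y = Y * X) \<and>
     (\<exists>(b :: nat \<Rightarrow> complex vec) (\<pi> :: nat \<Rightarrow> nat \<Rightarrow> nat) (lam :: nat \<Rightarrow> nat \<Rightarrow> real).
        (\<forall>j\<in>{1..n}. b j \<in> carrier_vec n) \<and>
        (\<forall>j\<in>{1..n}. \<forall>l\<in>{1..n}. b j \<bullet>c b l = (if j = l then 1 else 0)) \<and>
        (\<forall>i\<in>{1..m}. bij_betw (\<pi> i) {1..n} {1..n}) \<and>
        (\<forall>i\<in>{1..m}. \<forall>j\<in>{1..n}.
            A i *\<^sub>v b (\<pi> i j) = complex_of_real (lam i j) \<cdot>\<^sub>v b (\<pi> i j)) \<and>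
        (\<forall>i\<in>{1..m}. \<forall>j. 1 \<le> j \<and> j < n \<longrightarrow>
            0 < lam i (j+1) \<and> lam i (j+1) < lam i j / (real n)^2) \<and>
        (\<forall>i. 1 \<le> i \<and> i < m \<longrightarrow> (\<forall>j\<in>{1..n}.
            \<pi> (i+1) j = \<pi> i ((j + shift n m i - 1) mod n + 1))) \<and>
        (\<exists>e. bij_betw e {1..n} {1..n} \<and>
            (\<forall>l\<in>{1..n}. \<exists>i\<in>{1..m}. e l = \<pi> i (nat \<lceil>real l / real m\<rceil>))))"

end

theory Submission
  imports Defs "Jordan_Normal_Form.Gram_Schmidt" "HOL-Analysis.L2_Norm"
begin

text \<open>Suppose every code of the coloring had dimension larger than
  \<open>D = \<lceil>(dim S\<^sup>\<bottom> + 1) / m\<rceil>\<close>. On a code \<open>C\<close> each compressed generator \<open>P\<^sub>C A\<^sub>i P\<^sub>C\<close> is a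
  scalar \<open>\<epsilon> P\<^sub>C\<close>. Since \<open>dim C > D\<close>, some nonzero vector of \<open>C\<close> is orthogonal to the \<open>D\<close> leading
  eigenvectors of \<open>A\<^sub>i\<close>, whence \<open>\<epsilon> \<le> \<lambda>\<^sub>i\<^sub>,\<^sub>D\<^sub>+\<^sub>1\<close>; testing the compression on \<open>P\<^sub>C w\<^sub>i\<^sub>,\<^sub>j\<close>
  gives \<open>\<lambda>\<^sub>i\<^sub>,\<^sub>j \<parallel>P\<^sub>C w\<^sub>i\<^sub>,\<^sub>j\<parallel>\<^sup>2 \<le> \<epsilon>\<close>, so the tropical gap forces \<open>\<parallel>P\<^sub>C w\<^sub>i\<^sub>,\<^sub>j\<parallel>\<^sup>2 < 1/n\<^sup>2\<close> for
  \<open>j \<le> D\<close>. The projections onto the at most \<open>n\<close> codes add up to \<open>P\<^sub>S\<close>, hence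
  \<open>\<parallel>P\<^sub>S w\<^sub>i\<^sub>,\<^sub>j\<parallel>\<^sup>2 < 1/n\<close>. By the enumeration (iv) the basis vectors \<open>w\<^sub>1, \<dots>, w\<^sub>p\<^sub>+\<^sub>1\<close>,
  \<open>p = dim S\<^sup>\<bottom>\<close>, are all of this kind, so their components orthogonal to \<open>S\<close> form a small
  perturbation of an orthonormal family: \<open>p + 1\<close> linearly independent vectors in \<open>S\<^sup>\<bottom>\<close>.\<close>

section \<open>The Hermitian inner product on complex vectors\<close>

lemma cscalar_prod_expand:
  fixes x y :: "complex vec"
  assumes "y \<in> carrier_vec n"
  shows "x \<bullet>c y = (\<Sum>r<n. x $ r * cnj (y $ r))"
  using assms by (auto simp: scalar_prod_def lessThan_atLeast0)

lemma cscalar_prod_conj_swap: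
  fixes x y :: "complex vec"
  assumes "x \<in> carrier_vec n" "y \<in> carrier_vec n"
  shows "x \<bullet>c y = cnj (y \<bullet>c x)"
  unfolding cscalar_prod_expand[OF assms(1)] cscalar_prod_expand[OF assms(2)]
  by (simp add: mult.commute)

lemma cscalar_prod_add_left:
  fixes x y z :: "complex vec"
  assumes "x \<in> carrier_vec n" "y \<in> carrier_vec n" "z \<in> carrier_vec n"
  shows "(x + y) \<bullet>c z = x \<bullet>c z + y \<bullet>c z"
  using assms by (simp add: add_scalar_prod_distrib[of _ n])

lemma cscalar_prod_diff_left:
  fixes x y z :: "complex vec"
  assumes "x \<in> carrier_vec n" "y \<in> carrier_vec n" "z \<in> carrier_vec n"
  shows "(x - y) \<bullet>c z = x \<bullet>c z - y \<bullet>c z"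
  using assms by (simp add: minus_scalar_prod_distrib[of _ n])

lemma cscalar_prod_smult_left:
  fixes x y :: "complex vec"
  assumes "x \<in> carrier_vec n" "y \<in> carrier_vec n"
  shows "(a \<cdot>\<^sub>v x) \<bullet>c y = a * (x \<bullet>c y)"
  using assms by (simp add: smult_scalar_prod_distrib[of _ n])

definition sqnorm :: "complex vec \<Rightarrow> real" where
  "sqnorm v = (\<Sum>r<dim_vec v. (cmod (v $ r))\<^sup>2)"

lemma sqnorm_nonneg: "0 \<le> sqnorm v"
  unfolding sqnorm_def by (auto intro: sum_nonneg)

lemma cscalar_prod_self: "v \<bullet>c v = complex_of_real (sqnorm v)"
  by (simp add: sqnorm_def scalar_prod_def lessThan_atLeast0 complex_norm_square
      flip: of_real_power)

lemma sqnorm_eq_0_iff: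
  assumes "v \<in> carrier_vec n"
  shows "sqnorm v = 0 \<longleftrightarrow> v = 0\<^sub>v n"
  using conjugate_square_eq_0_vec[OF assms] by (simp add: cscalar_prod_self)

lemma sqnorm_pos:
  assumes "v \<in> carrier_vec n" "v \<noteq> 0\<^sub>v n"
  shows "0 < sqnorm v"
  using sqnorm_nonneg[of v] sqnorm_eq_0_iff[OF assms(1)] assms(2) by linarith

lemma cscalar_prod_Cauchy_Schwarz:
  fixes x y :: "complex vec"
  assumes "x \<in> carrier_vec n" "y \<in> carrier_vec n"
  shows "cmod (x \<bullet>c y) \<le> sqrt (sqnorm x) * sqrt (sqnorm y)"
proof -
  have "cmod (x \<bullet>c y) \<le> (\<Sum>r<n. \<bar>cmod (x $ r)\<bar> * \<bar>cmod (y $ r)\<bar>)"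
    unfolding cscalar_prod_expand[OF assms(2)]
    by (rule order_trans[OF norm_sum]) (simp add: norm_mult)
  also have "\<dots> \<le> L2_set (\<lambda>r. cmod (x $ r)) {..<n} * L2_set (\<lambda>r. cmod (y $ r)) {..<n}"
    by (rule L2_set_mult_ineq)
  also have "\<dots> = sqrt (sqnorm x) * sqrt (sqnorm y)"
    using assms by (simp add: L2_set_def sqnorm_def)
  finally show ?thesis .
qed

lemma cscalar_prod_Cauchy_Schwarz_sq:
  fixes x y :: "complex vec"
  assumes "x \<in> carrier_vec n" "y \<in> carrier_vec n"
  shows "(cmod (x \<bullet>c y))\<^sup>2 \<le> sqnorm x * sqnorm y"
proof -
  have "(cmod (x \<bullet>c y))\<^sup>2 \<le> (sqrt (sqnorm x) * sqrt (sqnorm y))\<^sup>2"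
    using cscalar_prod_Cauchy_Schwarz[OF assms] by (simp add: power_mono)
  thus ?thesis by (simp add: power_mult_distrib sqnorm_nonneg)
qed

section \<open>Subspaces, spans and dimension\<close>

abbreviation cspan :: "nat \<Rightarrow> complex vec set \<Rightarrow> complex vec set" where
  "cspan n \<equiv> LinearCombinations.module.span class_ring (module_vec TYPE(complex) n)"

abbreviation clin_dep :: "nat \<Rightarrow> complex vec set \<Rightarrow> bool" where
  "clin_dep n \<equiv> LinearCombinations.module.lin_dep class_ring (module_vec TYPE(complex) n)"

lemma csubspaceI:
  assumes "W \<subseteq> carrier_vec n" "0\<^sub>v n \<in> W"
    and "\<And>x y. x \<in> W \<Longrightarrow> y \<in> W \<Longrightarrow> x + y \<in> W"
    and "\<And>x a. x \<in> W \<Longrightarrow> a \<cdot>\<^sub>v x \<in> W"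
  shows "csubspace n W"
  using assms vec_vs[of n] vec_module[of n]
  unfolding csubspace_def VectorSpace.subspace_def LinearCombinations.submodule_def
  by (auto simp: module_vec_simps)

lemma csubspace_carrier: "csubspace n W \<Longrightarrow> W \<subseteq> carrier_vec n"
  unfolding csubspace_def VectorSpace.subspace_def LinearCombinations.submodule_def
  by (auto simp: module_vec_simps)

lemma csubspace_zero: "csubspace n W \<Longrightarrow> 0\<^sub>v n \<in> W"
  unfolding csubspace_def VectorSpace.subspace_def LinearCombinations.submodule_def
  by (auto simp: module_vec_simps)

lemma csubspace_diff:
  assumes W: "csubspace n W" and "x \<in> W" "y \<in> W"
  shows "x - y \<in> W"
proof -
  have closed: "u + v \<in> W" "a \<cdot>\<^sub>v u \<in> W" if "u \<in> W" "v \<in> W" for u v a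
    using W that unfolding csubspace_def VectorSpace.subspace_def LinearCombinations.submodule_def
    by (auto simp: module_vec_simps)
  have "x - y = x + (-1) \<cdot>\<^sub>v y" using assms csubspace_carrier[OF W] by auto
  thus ?thesis using closed assms(2,3) by metis
qed

context
  fixes n :: nat and W :: "complex vec set"
  assumes W: "csubspace n W"
begin

interpretation V: vec_space "TYPE(complex)" n .

lemma csubspace_submodule: "submodule class_ring W V.V"
  using W unfolding csubspace_def VectorSpace.subspace_def by simp

interpretation Wv: vectorspace class_ring "V.vs W"
  using V.subspace_is_vs W unfolding csubspace_def by simp

lemma csubspace_maximal_lin_indep:
  obtains B where "finite B" "maximal B (\<lambda>B. B \<subseteq> W \<and> \<not> Wv.lin_dep B)"
proof -
  let ?li = "\<lambda>B. B \<subseteq> W \<and> \<not> Wv.lin_dep B"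
  have bounded: "finite B \<and> card B \<le> n" if "?li B" for B
  proof -
    have "B \<subseteq> carrier_vec n" "\<not> V.lin_dep B"
      using that csubspace_carrier[OF W] V.span_li_not_depend(2)[OF _ csubspace_submodule] by auto
    thus ?thesis using V.li_le_dim[OF V.fin_dim] V.dim_is_n by auto
  qed
  have "?li {}" by (simp add: Wv.lin_dep_def)
  thus ?thesis using maximal_exists[of ?li n "{}", OF bounded] that by blast
qed

lemma csubspace_basis:
  obtains B where "finite B" "B \<subseteq> W" "\<not> clin_dep n B" "cspan n B = W" "card B = cdim n W"
proof -
  obtain B where B: "finite B" "maximal B (\<lambda>B. B \<subseteq> W \<and> \<not> Wv.lin_dep B)"
    using csubspace_maximal_lin_indep .
  have BW: "B \<subseteq> W" and li: "\<not> Wv.lin_dep B" using B(2) unfolding maximal_def by blast+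
  show ?thesis
  proof (rule that[OF B(1) BW])
    show "\<not> clin_dep n B" using li V.span_li_not_depend(2)[OF BW csubspace_submodule] by simp
    show "cspan n B = W"
      using Wv.max_li_is_gen[of B] B(2) V.span_li_not_depend(1)[OF BW csubspace_submodule] by simp
    show "card B = cdim n W"
      using Wv.dim_basis[OF B(1) Wv.max_li_is_basis[of B]] B(2) unfolding cdim_def by simp
  qed
qed

lemma csubspace_fin_dim: "Wv.fin_dim"
proof -
  obtain B where B: "finite B" "maximal B (\<lambda>B. B \<subseteq> W \<and> \<not> Wv.lin_dep B)"
    using csubspace_maximal_lin_indep .
  hence "Wv.basis B" using Wv.max_li_is_basis[of B] by simp
  thus ?thesis using B(1) unfolding Wv.fin_dim_def Wv.basis_def by blast
qed

lemma cdim_le_card_spanning: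
  assumes G: "finite G" "G \<subseteq> W" "cspan n G = W"
  shows "cdim n W \<le> card G"
proof -
  have "Wv.span G = W" using V.span_li_not_depend(1)[OF G(2) csubspace_submodule] G(3) by simp
  thus ?thesis using Wv.gen_ge_dim[OF G(1)] G(2) unfolding cdim_def by simp
qed

lemma card_le_cdim_if_lin_indep:
  assumes A: "A \<subseteq> W" "\<not> clin_dep n A"
  shows "finite A" "card A \<le> cdim n W"
proof -
  have "\<not> Wv.lin_dep A" using V.span_li_not_depend(2)[OF A(1) csubspace_submodule] A(2) by simp
  thus "finite A" "card A \<le> cdim n W"
    using Wv.li_le_dim[OF csubspace_fin_dim] A(1) unfolding cdim_def by simp_all
qed

lemma cspan_subset_csubspace: "G \<subseteq> W \<Longrightarrow> cspan n G \<subseteq> W"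
  using V.span_is_subset[OF _ csubspace_submodule] by simp

end

lemma cspan_csubspace: "G \<subseteq> carrier_vec n \<Longrightarrow> csubspace n (cspan n G)"
proof -
  interpret V: vec_space "TYPE(complex)" n .
  show "G \<subseteq> carrier_vec n \<Longrightarrow> csubspace n (cspan n G)"
    using V.span_is_subspace unfolding csubspace_def by simp
qed

lemma cspan_superset: "G \<subseteq> carrier_vec n \<Longrightarrow> G \<subseteq> cspan n G"
proof -
  interpret V: vec_space "TYPE(complex)" n .
  show "G \<subseteq> carrier_vec n \<Longrightarrow> G \<subseteq> cspan n G" using V.in_own_span by simp
qed

lemma cdim_le_dim:
  assumes C: "csubspace n C"
  shows "cdim n C \<le> n"
proof -
  interpret V: vec_space "TYPE(complex)" n .
  obtain B where B: "finite B" "B \<subseteq> C" "\<not> clin_dep n B" "cspan n B = C" "card B = cdim n C"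
    by (rule csubspace_basis[OF C])
  have "B \<subseteq> carrier_vec n" using B(2) csubspace_carrier[OF C] by auto
  hence "card B \<le> n" using V.li_le_dim(2)[OF V.fin_dim _ B(3)] V.dim_is_n by simp
  thus ?thesis using B(5) by simp
qed

lemma cdim_zero_space: "cdim n {0\<^sub>v n} = 0"
proof -
  interpret V: vec_space "TYPE(complex)" n .
  have "csubspace n {0\<^sub>v n}" by (rule csubspaceI) auto
  hence "cdim n {0\<^sub>v n} \<le> card {}" using cdim_le_card_spanning[of n _ "{}"] V.span_empty by simp
  thus ?thesis by simp
qed

section \<open>Orthogonal projections\<close>

definition is_orth_proj :: "nat \<Rightarrow> complex vec set \<Rightarrow> complex mat \<Rightarrow> bool" where
  "is_orth_proj n W P \<longleftrightarrow> P \<in> carrier_mat n n \<and>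
     (\<forall>v\<in>carrier_vec n. P *\<^sub>v v \<in> W \<and> (\<forall>w\<in>W. (v - P *\<^sub>v v) \<bullet>c w = 0))"

lemma mat_eq_if_mult_vec_eq:
  fixes A B :: "'a :: comm_ring_1 mat"
  assumes A: "A \<in> carrier_mat n n" and B: "B \<in> carrier_mat n n"
    and eq: "\<And>v. v \<in> carrier_vec n \<Longrightarrow> A *\<^sub>v v = B *\<^sub>v v"
  shows "A = B"
proof (rule eq_matI)
  fix i j assume "i < dim_row B" "j < dim_col B"
  hence ij: "i < n" "j < n" using B by auto
  have "A $$ (i, j) = (A *\<^sub>v unit_vec n j) $ i" using A ij by simp
  also have "\<dots> = (B *\<^sub>v unit_vec n j) $ i" using eq[of "unit_vec n j"] by simp
  also have "\<dots> = B $$ (i, j)" using B ij by simp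
  finally show "A $$ (i, j) = B $$ (i, j)" .
qed (use A B in auto)

lemma vec_eq_if_diff_eq_0:
  fixes a b :: "'a :: ab_group_add vec"
  assumes "a - b = 0\<^sub>v n" "a \<in> carrier_vec n" "b \<in> carrier_vec n"
  shows "a = b"
proof (rule eq_vecI)
  fix i assume "i < dim_vec b"
  thus "a $ i = b $ i" using arg_cong[OF assms(1), of "\<lambda>x. x $ i"] assms(2,3) by simp
qed (use assms(2,3) in simp)

lemma (in vec_space) lincomb_list_index:
  assumes us: "set us \<subseteq> carrier_vec n" and r: "r < n"
  shows "lincomb_list c us $ r = (\<Sum>k<length us. c k * us ! k $ r)"
proof -
  have usC: "us ! k \<in> carrier_vec n" if "k < length us" for k using us that by auto
  have "lincomb_list c us $ r = sum_list (map (\<lambda>x. x $ r) (map (\<lambda>i. c i \<cdot>\<^sub>v us ! i) [0..<length us]))"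
    unfolding lincomb_list_def by (rule sumlist_vec_index, insert usC r, auto)
  also have "\<dots> = (\<Sum>k<length us. c k * us ! k $ r)"
    by (simp add: sum_set_upt_conv_sum_list_nat[symmetric] lessThan_atLeast0 o_def,
        rule sum.cong, auto simp: usC[THEN carrier_vecD] r)
  finally show ?thesis .
qed

lemma cscalar_prod_span_eq_0:
  assumes us: "set us \<subseteq> carrier_vec n" and y: "y \<in> carrier_vec n"
    and orth: "\<And>k. k < length us \<Longrightarrow> y \<bullet>c us ! k = 0" and w: "w \<in> cspan n (set us)"
  shows "y \<bullet>c w = 0"
proof -
  interpret V: vec_space "TYPE(complex)" n .
  have usC: "us ! k \<in> carrier_vec n" if "k < length us" for k using us that by auto
  obtain a where a: "w = V.lincomb_list a us"
    using V.span_list_as_span[OF us] w by (auto elim: V.in_span_listE)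
  have "y \<bullet>c w = (\<Sum>r<n. y $ r * cnj (\<Sum>k<length us. a k * us ! k $ r))"
    unfolding a using V.lincomb_list_carrier[OF us]
    by (subst cscalar_prod_expand) (auto intro: sum.cong simp: V.lincomb_list_index[OF us])
  also have "\<dots> = (\<Sum>k<length us. cnj (a k) * (\<Sum>r<n. y $ r * cnj (us ! k $ r)))"
    by (simp add: sum_distrib_left sum_distrib_right algebra_simps sum.swap[of _ "{..<n}"])
  also have "\<dots> = (\<Sum>k<length us. cnj (a k) * (y \<bullet>c us ! k))"
    by (rule sum.cong, auto simp: cscalar_prod_expand[OF usC])
  finally show ?thesis using orth by simp
qed

lemma orth_proj_corthogonal:
  assumes us: "set us \<subseteq> carrier_vec n" and orth: "corthogonal us"
  shows "is_orth_proj n (cspan n (set us))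
    (mat n n (\<lambda>(r,s). \<Sum>k<length us. us ! k $ r * cnj (us ! k $ s) / (us ! k \<bullet>c us ! k)))"
    (is "is_orth_proj n ?W ?P")
proof -
  interpret V: vec_space "TYPE(complex)" n .
  have usC: "us ! k \<in> carrier_vec n" if "k < length us" for k using us that by auto
  define d where "d k = us ! k \<bullet>c us ! k" for k
  have d: "d k \<noteq> 0" if "k < length us" for k using corthogonalD[OF orth that that] d_def by auto
  have ortho: "us ! k \<bullet>c us ! j = 0" if "k < length us" "j < length us" "k \<noteq> j" for k j
    using corthogonalD[OF orth that(1,2)] that(3) by auto
  define coeff where "coeff v k = (v \<bullet>c us ! k) / d k" for v k
  have P_mult: "?P *\<^sub>v v = V.lincomb_list (coeff v) us" if v: "v \<in> carrier_vec n" for v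
  proof (rule eq_vecI)
    fix r assume "r < dim_vec (V.lincomb_list (coeff v) us)"
    hence r: "r < n" using V.lincomb_list_carrier[OF us, of "coeff v"] by simp
    have "(?P *\<^sub>v v) $ r = (\<Sum>s<n. (\<Sum>k<length us. us ! k $ r * cnj (us ! k $ s) / d k) * v $ s)"
      using r v by (simp add: d_def scalar_prod_def lessThan_atLeast0)
    also have "\<dots> = (\<Sum>k<length us. (\<Sum>s<n. v $ s * cnj (us ! k $ s)) / d k * us ! k $ r)"
      by (simp add: sum_distrib_left sum_distrib_right sum_divide_distrib algebra_simps
          sum.swap[of _ "{..<n}"])
    also have "\<dots> = V.lincomb_list (coeff v) us $ r"
      unfolding V.lincomb_list_index[OF us r] coeff_def
      by (rule sum.cong, simp, subst cscalar_prod_expand[OF usC], auto)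
    finally show "(?P *\<^sub>v v) $ r = V.lincomb_list (coeff v) us $ r" .
  qed (use V.lincomb_list_carrier[OF us, of "coeff v", THEN carrier_vecD] in simp)
  have residual_orth: "(v - ?P *\<^sub>v v) \<bullet>c us ! j = 0" if v: "v \<in> carrier_vec n" and j: "j < length us"
    for v j
  proof -
    have "(?P *\<^sub>v v) \<bullet>c us ! j = (\<Sum>r<n. (\<Sum>k<length us. coeff v k * us ! k $ r) * cnj (us ! j $ r))"
      unfolding P_mult[OF v] using usC[OF j] by (simp add: cscalar_prod_expand V.lincomb_list_index[OF us])
    also have "\<dots> = (\<Sum>k<length us. coeff v k * (us ! k \<bullet>c us ! j))"
      using usC[OF j] by (simp add: cscalar_prod_expand sum_distrib_left sum_distrib_right
          algebra_simps sum.swap[of _ "{..<n}"])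
    also have "\<dots> = (\<Sum>k\<in>{j}. coeff v k * (us ! k \<bullet>c us ! j))"
      by (rule sum.mono_neutral_right, insert j ortho, auto)
    also have "\<dots> = v \<bullet>c us ! j" using d[OF j] by (simp add: coeff_def d_def)
    finally show ?thesis
      using v usC[OF j] V.lincomb_list_carrier[OF us] P_mult[OF v] by (simp add: cscalar_prod_diff_left)
  qed
  show ?thesis
    unfolding is_orth_proj_def
  proof (intro conjI ballI)
    fix v :: "complex vec" assume v: "v \<in> carrier_vec n"
    have "V.lincomb_list (coeff v) us \<in> V.span_list us" by (rule V.in_span_listI, auto)
    thus "?P *\<^sub>v v \<in> ?W" using P_mult[OF v] V.span_list_as_span[OF us] by simp
    show "(v - ?P *\<^sub>v v) \<bullet>c w = 0" if "w \<in> ?W" for w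
      using cscalar_prod_span_eq_0[OF us _ residual_orth[OF v] that] v P_mult[OF v]
        V.lincomb_list_carrier[OF us] by simp
  qed simp
qed

lemma orth_proj_exists:
  assumes W: "csubspace n W"
  shows "\<exists>P. is_orth_proj n W P"
proof -
  interpret V: cof_vec_space n "TYPE(complex)" .
  obtain B where B: "finite B" "B \<subseteq> W" "\<not> clin_dep n B" "cspan n B = W" "card B = cdim n W"
    by (rule csubspace_basis[OF W])
  obtain ws where ws: "set ws = B" "distinct ws" using finite_distinct_list[OF B(1)] by blast
  \<comment> \<open>Gram-Schmidt turns a basis of \<open>W\<close> into an orthogonal one, and \<open>\<Sum>\<^sub>k u\<^sub>k u\<^sub>k\<^sup>* / \<langle>u\<^sub>k, u\<^sub>k\<rangle>\<close>
    is the projection onto its span\<close>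
  define us where "us = gram_schmidt n ws"
  have "set ws \<subseteq> carrier_vec n" using ws B csubspace_carrier[OF W] by auto
  note gs = V.gram_schmidt_result[OF this ws(2) _ us_def]
  have span: "cspan n (set us) = W" using gs(1) B(3,4) ws(1) by simp
  have orth: "corthogonal us" using gs(2) B(3) ws(1) by simp
  have usC: "set us \<subseteq> carrier_vec n" using gs(3) B(3) ws(1) by simp
  show ?thesis using orth_proj_corthogonal[OF usC orth] unfolding span by blast
qed

lemma orth_proj_unique:
  assumes W: "csubspace n W" and P: "is_orth_proj n W P" and Q: "is_orth_proj n W Q"
  shows "P = Q"
proof (rule mat_eq_if_mult_vec_eq)
  show "P \<in> carrier_mat n n" "Q \<in> carrier_mat n n"
    using P Q unfolding is_orth_proj_def by simp_all
  fix v :: "complex vec" assume v: "v \<in> carrier_vec n"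
  have PvW: "P *\<^sub>v v \<in> W" and QvW: "Q *\<^sub>v v \<in> W"
    using P Q v unfolding is_orth_proj_def by simp_all
  define d where "d = P *\<^sub>v v - Q *\<^sub>v v"
  have dW: "d \<in> W" unfolding d_def using csubspace_diff[OF W PvW QvW] .
  have C: "d \<in> carrier_vec n" "P *\<^sub>v v \<in> carrier_vec n" "Q *\<^sub>v v \<in> carrier_vec n"
    using dW PvW QvW csubspace_carrier[OF W] by auto
  \<comment> \<open>both \<open>P v\<close> and \<open>Q v\<close> have the same inner products with \<open>W\<close> as \<open>v\<close>\<close>
  have "(v - P *\<^sub>v v) \<bullet>c d = 0" "(v - Q *\<^sub>v v) \<bullet>c d = 0"
    using P Q v dW unfolding is_orth_proj_def by simp_all
  hence "(P *\<^sub>v v) \<bullet>c d = (Q *\<^sub>v v) \<bullet>c d" using v C by (simp add: cscalar_prod_diff_left)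
  hence "d \<bullet>c d = 0" unfolding d_def using C unfolding d_def by (simp add: cscalar_prod_diff_left)
  hence "d = 0\<^sub>v n" using C(1) by simp
  thus "P *\<^sub>v v = Q *\<^sub>v v" unfolding d_def using C(2,3) by (rule vec_eq_if_diff_eq_0)
qed

lemma is_orth_proj_proj:
  assumes "csubspace n W"
  shows "is_orth_proj n W (proj n W)"
proof -
  obtain P where P: "is_orth_proj n W P" using orth_proj_exists[OF assms] ..
  have "is_orth_proj n W (THE P. is_orth_proj n W P)"
    by (rule theI[of "is_orth_proj n W", OF P], rule orth_proj_unique[OF assms _ P])
  thus ?thesis unfolding proj_def is_orth_proj_def .
qed

context
  fixes n :: nat and W :: "complex vec set"
  assumes W: "csubspace n W"
begin

lemma proj_carrier: "proj n W \<in> carrier_mat n n"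
  using is_orth_proj_proj[OF W] unfolding is_orth_proj_def by simp

lemma proj_mult_vec_mem: "v \<in> carrier_vec n \<Longrightarrow> proj n W *\<^sub>v v \<in> W"
  using is_orth_proj_proj[OF W] unfolding is_orth_proj_def by simp

lemma proj_mult_vec_carrier: "v \<in> carrier_vec n \<Longrightarrow> proj n W *\<^sub>v v \<in> carrier_vec n"
  using proj_carrier by simp

lemma proj_residual_orth: "v \<in> carrier_vec n \<Longrightarrow> w \<in> W \<Longrightarrow> (v - proj n W *\<^sub>v v) \<bullet>c w = 0"
  using is_orth_proj_proj[OF W] unfolding is_orth_proj_def by simp

lemma cscalar_prod_proj_left:
  assumes v: "v \<in> carrier_vec n" and w: "w \<in> W"
  shows "(proj n W *\<^sub>v v) \<bullet>c w = v \<bullet>c w"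
  using proj_residual_orth[OF v w] v w csubspace_carrier[OF W] proj_mult_vec_carrier[OF v]
  by (auto simp: cscalar_prod_diff_left)

lemma proj_fixes:
  assumes w: "w \<in> W"
  shows "proj n W *\<^sub>v w = w"
proof -
  have wC: "w \<in> carrier_vec n" using w csubspace_carrier[OF W] by auto
  define d where "d = w - proj n W *\<^sub>v w"
  have dW: "d \<in> W" unfolding d_def by (rule csubspace_diff[OF W w proj_mult_vec_mem[OF wC]])
  hence dC: "d \<in> carrier_vec n" using csubspace_carrier[OF W] by auto
  have "d \<bullet>c d = 0" using proj_residual_orth[OF wC dW] unfolding d_def .
  hence "d = 0\<^sub>v n" using dC by simp
  thus ?thesis unfolding d_def using wC proj_mult_vec_carrier[OF wC] vec_eq_if_diff_eq_0 by metis
qed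

lemma proj_self_adjoint:
  assumes v: "v \<in> carrier_vec n" and y: "y \<in> carrier_vec n"
  shows "(proj n W *\<^sub>v v) \<bullet>c y = v \<bullet>c (proj n W *\<^sub>v y)"
proof -
  let ?P = "proj n W"
  have "(?P *\<^sub>v v) \<bullet>c y = cnj ((?P *\<^sub>v y) \<bullet>c (?P *\<^sub>v v))"
    using cscalar_prod_conj_swap[OF proj_mult_vec_carrier[OF v] y]
      cscalar_prod_proj_left[OF y proj_mult_vec_mem[OF v]] by simp
  also have "\<dots> = (?P *\<^sub>v v) \<bullet>c (?P *\<^sub>v y)"
    using cscalar_prod_conj_swap[OF proj_mult_vec_carrier[OF v] proj_mult_vec_carrier[OF y]] by simp
  also have "\<dots> = v \<bullet>c (?P *\<^sub>v y)" by (rule cscalar_prod_proj_left[OF v proj_mult_vec_mem[OF y]])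
  finally show ?thesis .
qed

lemma cscalar_prod_proj_self:
  assumes v: "v \<in> carrier_vec n"
  shows "(proj n W *\<^sub>v v) \<bullet>c v = complex_of_real (sqnorm (proj n W *\<^sub>v v))"
  using proj_self_adjoint[OF v v] cscalar_prod_proj_left[OF v proj_mult_vec_mem[OF v]]
  by (simp add: cscalar_prod_self)

lemma sqnorm_proj_le:
  assumes v: "v \<in> carrier_vec n"
  shows "sqnorm (proj n W *\<^sub>v v) \<le> sqnorm v"
proof -
  let ?N = "sqnorm (proj n W *\<^sub>v v)"
  have "sqrt ?N * sqrt ?N = cmod ((proj n W *\<^sub>v v) \<bullet>c v)"
    by (simp add: cscalar_prod_proj_self[OF v] sqnorm_nonneg)
  also have "\<dots> \<le> sqrt ?N * sqrt (sqnorm v)"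
    by (rule cscalar_prod_Cauchy_Schwarz[OF proj_mult_vec_carrier[OF v] v])
  finally have le: "sqrt ?N * sqrt ?N \<le> sqrt ?N * sqrt (sqnorm v)" .
  show ?thesis
  proof (cases "?N = 0")
    case True
    thus ?thesis using sqnorm_nonneg[of v] by simp
  next
    case False
    hence "0 < sqrt ?N" using sqnorm_nonneg[of "proj n W *\<^sub>v v"] by simp
    hence "sqrt ?N \<le> sqrt (sqnorm v)" using le by (simp only: mult_le_cancel_left_pos)
    thus ?thesis by simp
  qed
qed

end

lemma csubspace_ex_nonzero_orthogonal:
  assumes C: "csubspace n C" and g: "\<And>k. k < D \<Longrightarrow> g k \<in> carrier_vec n"
    and dim: "D < cdim n C"
  shows "\<exists>v\<in>C. v \<noteq> 0\<^sub>v n \<and> (\<forall>k<D. v \<bullet>c g k = 0)"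
proof (rule ccontr)
  assume "\<not> ?thesis"
  hence only_zero: "v = 0\<^sub>v n" if "v \<in> C" "\<forall>k<D. v \<bullet>c g k = 0" for v
    using that by blast
  have CC: "C \<subseteq> carrier_vec n" using csubspace_carrier[OF C] .
  \<comment> \<open>then the at most \<open>D\<close> projections of the \<open>g k\<close> onto \<open>C\<close> span \<open>C\<close>\<close>
  define G where "G = (\<lambda>k. proj n C *\<^sub>v g k) ` {..<D}"
  have GC: "G \<subseteq> C" unfolding G_def using proj_mult_vec_mem[OF C g] by auto
  define T where "T = cspan n G"
  have T: "csubspace n T" unfolding T_def using GC CC by (intro cspan_csubspace) auto
  have TC: "T \<subseteq> C" unfolding T_def by (rule cspan_subset_csubspace[OF C GC])
  have GT: "G \<subseteq> T" unfolding T_def using GC CC by (intro cspan_superset) auto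
  have "C \<subseteq> T"
  proof
    fix x assume x: "x \<in> C"
    have xC: "x \<in> carrier_vec n" using x CC by auto
    define y where "y = x - proj n T *\<^sub>v x"
    have yC: "y \<in> C" unfolding y_def
      using csubspace_diff[OF C x] proj_mult_vec_mem[OF T xC] TC by auto
    have "y \<bullet>c g k = 0" if k: "k < D" for k
    proof -
      have "proj n C *\<^sub>v g k \<in> T" using GT k unfolding G_def by auto
      hence "y \<bullet>c (proj n C *\<^sub>v g k) = 0" unfolding y_def by (rule proj_residual_orth[OF T xC])
      thus ?thesis using proj_self_adjoint[OF C _ g[OF k], of y] proj_fixes[OF C yC] yC CC by auto
    qed
    hence "y = 0\<^sub>v n" using only_zero yC by blast
    hence "x = proj n T *\<^sub>v x"
      unfolding y_def using xC proj_mult_vec_carrier[OF T xC] by (rule vec_eq_if_diff_eq_0)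
    thus "x \<in> T" using proj_mult_vec_mem[OF T xC] by simp
  qed
  hence "cdim n C \<le> card G"
    using TC cdim_le_card_spanning[OF C _ GC] unfolding T_def G_def by auto
  also have "\<dots> \<le> D" unfolding G_def using card_image_le[of "{..<D}"] by simp
  finally show False using dim by simp
qed

lemma perp_csubspace:
  assumes "S \<subseteq> carrier_vec n"
  shows "csubspace n (perp n S)"
proof (rule csubspaceI)
  show "perp n S \<subseteq> carrier_vec n" "0\<^sub>v n \<in> perp n S"
    unfolding perp_def using assms by (auto simp: scalar_prod_def)
  fix x y a assume "x \<in> perp n S" "y \<in> perp n S"
  thus "x + y \<in> perp n S" "a \<cdot>\<^sub>v x \<in> perp n S"
    using assms unfolding perp_def by (auto simp: cscalar_prod_add_left cscalar_prod_smult_left)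
qed

lemma proj_residual_mem_perp:
  assumes "csubspace n S" "x \<in> carrier_vec n"
  shows "x - proj n S *\<^sub>v x \<in> perp n S"
  unfolding perp_def using assms proj_residual_orth[OF assms] proj_mult_vec_carrier by auto

lemma cdim_perp_less:
  assumes S: "csubspace n S" and nonzero: "S \<noteq> {0\<^sub>v n}"
  shows "cdim n (perp n S) < n"
proof -
  interpret V: vec_space "TYPE(complex)" n .
  obtain s where s: "s \<in> S" "s \<noteq> 0\<^sub>v n" using nonzero csubspace_zero[OF S] by blast
  have SC: "S \<subseteq> carrier_vec n" using csubspace_carrier[OF S] .
  hence sC: "s \<in> carrier_vec n" using s by auto
  have P: "csubspace n (perp n S)" by (rule perp_csubspace[OF SC])
  obtain B where B: "finite B" "B \<subseteq> perp n S" "\<not> clin_dep n B" "cspan n B = perp n S"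
    "card B = cdim n (perp n S)"
    by (rule csubspace_basis[OF P])
  have "s \<bullet>c s \<noteq> 0" using s sC by simp
  hence "s \<notin> perp n S" using s(1) unfolding perp_def by auto
  moreover have BC: "B \<subseteq> carrier_vec n" using B(2) unfolding perp_def by auto
  ultimately have "\<not> clin_dep n (B \<union> {s})" and sB: "s \<notin> B"
    using V.lin_dep_iff_in_span[OF BC _ sC] B(2,3,4) by auto
  hence "card (B \<union> {s}) \<le> n" using V.li_le_dim(2)[OF V.fin_dim] BC sC V.dim_is_n by auto
  thus ?thesis using B(1,5) sB by simp
qed

section \<open>Orthonormal families\<close>

definition orthonormal_on :: "nat \<Rightarrow> (nat \<Rightarrow> complex vec) \<Rightarrow> nat set \<Rightarrow> bool" where
  "orthonormal_on n f I \<longleftrightarrow> (\<forall>j\<in>I. f j \<in> carrier_vec n) \<and>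
     (\<forall>j\<in>I. \<forall>k\<in>I. f j \<bullet>c f k = (if j = k then 1 else 0))"

lemma orthonormal_onD:
  assumes "orthonormal_on n f I"
  shows orthonormal_on_carrier: "j \<in> I \<Longrightarrow> f j \<in> carrier_vec n"
    and orthonormal_on_cscalar_prod: "j \<in> I \<Longrightarrow> k \<in> I \<Longrightarrow> f j \<bullet>c f k = (if j = k then 1 else 0)"
  using assms unfolding orthonormal_on_def by auto

lemma orthonormal_on_reindex:
  assumes "orthonormal_on n f I" "inj_on g J" "g ` J \<subseteq> I"
  shows "orthonormal_on n (\<lambda>k. f (g k)) J"
  using assms unfolding orthonormal_on_def inj_on_def by (auto simp: subset_iff)

context
  fixes n :: nat and f :: "nat \<Rightarrow> complex vec"
  assumes onb: "orthonormal_on n f {..<n}"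
begin

private lemma onb_carrier: "j < n \<Longrightarrow> f j \<in> carrier_vec n"
  using orthonormal_on_carrier[OF onb] by simp

lemma orthonormal_basis_expand:
  assumes x: "x \<in> carrier_vec n" and r: "r < n"
  shows "x $ r = (\<Sum>j<n. (x \<bullet>c f j) * f j $ r)"
proof -
  \<comment> \<open>the matrix with columns \<open>f j\<close> is unitary, so its rows are orthonormal as well\<close>
  define B where "B = mat n n (\<lambda>(r,j). f j $ r)"
  define B' where "B' = mat n n (\<lambda>(j,r). cnj (f j $ r))"
  have BC: "B \<in> carrier_mat n n" "B' \<in> carrier_mat n n" unfolding B_def B'_def by auto
  have "B' * B = 1\<^sub>m n"
  proof (rule eq_matI)
    fix j k assume "j < dim_row (1\<^sub>m n :: complex mat)" "k < dim_col (1\<^sub>m n :: complex mat)"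
    hence jk: "j < n" "k < n" by auto
    have "(B' * B) $$ (j,k) = (\<Sum>r<n. cnj (f j $ r) * f k $ r)"
      using jk unfolding B_def B'_def by (simp add: scalar_prod_def lessThan_atLeast0)
    also have "\<dots> = f k \<bullet>c f j" using onb_carrier[OF jk(1)] by (simp add: cscalar_prod_expand mult.commute)
    also have "\<dots> = 1\<^sub>m n $$ (j,k)" using orthonormal_on_cscalar_prod[OF onb, of k j] jk by auto
    finally show "(B' * B) $$ (j,k) = 1\<^sub>m n $$ (j,k)" .
  qed (use BC in auto)
  hence BB': "B * B' = 1\<^sub>m n" using mat_mult_left_right_inverse[OF BC(2,1)] by simp
  have rows: "(\<Sum>j<n. f j $ r * cnj (f j $ s)) = (if r = s then 1 else 0)" if s: "s < n" for s
  proof -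
    have "(B * B') $$ (r,s) = (\<Sum>j<n. f j $ r * cnj (f j $ s))"
      using r s unfolding B_def B'_def by (simp add: scalar_prod_def lessThan_atLeast0)
    thus ?thesis using BB' r s by simp
  qed
  have "(\<Sum>j<n. (x \<bullet>c f j) * f j $ r) = (\<Sum>j<n. \<Sum>s<n. x $ s * (f j $ r * cnj (f j $ s)))"
    by (intro sum.cong refl) (simp add: cscalar_prod_expand[OF onb_carrier] sum_distrib_left mult_ac)
  also have "\<dots> = (\<Sum>s<n. x $ s * (\<Sum>j<n. f j $ r * cnj (f j $ s)))"
    by (subst sum.swap) (simp add: sum_distrib_left)
  also have "\<dots> = x $ r" using r by (simp add: rows if_distrib cong: if_cong)
  finally show ?thesis ..
qed

lemma sqnorm_orthonormal_basis:
  assumes x: "x \<in> carrier_vec n"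
  shows "sqnorm x = (\<Sum>j<n. (cmod (x \<bullet>c f j))\<^sup>2)"
proof -
  have "x \<bullet>c x = (\<Sum>r<n. x $ r * cnj (\<Sum>j<n. (x \<bullet>c f j) * f j $ r))"
    unfolding cscalar_prod_expand[OF x] using orthonormal_basis_expand[OF x] by simp
  also have "\<dots> = (\<Sum>r<n. \<Sum>j<n. cnj (x \<bullet>c f j) * (x $ r * cnj (f j $ r)))"
    by (simp add: sum_distrib_left mult_ac)
  also have "\<dots> = (\<Sum>j<n. cnj (x \<bullet>c f j) * (\<Sum>r<n. x $ r * cnj (f j $ r)))"
    by (subst sum.swap) (simp add: sum_distrib_left)
  also have "\<dots> = (\<Sum>j<n. cnj (x \<bullet>c f j) * (x \<bullet>c f j))"
    by (intro sum.cong refl) (simp add: cscalar_prod_expand[OF onb_carrier])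
  also have "\<dots> = complex_of_real (\<Sum>j<n. (cmod (x \<bullet>c f j))\<^sup>2)"
    by (simp add: complex_norm_square mult.commute flip: of_real_power)
  finally have "complex_of_real (sqnorm x) = complex_of_real (\<Sum>j<n. (cmod (x \<bullet>c f j))\<^sup>2)"
    by (simp only: cscalar_prod_self)
  thus ?thesis by (simp only: of_real_eq_iff)
qed

lemma quadratic_form_eigenbasis:
  assumes A: "A \<in> carrier_mat n n"
    and eig: "\<And>j. j < n \<Longrightarrow> A *\<^sub>v f j = complex_of_real (lam j) \<cdot>\<^sub>v f j"
    and x: "x \<in> carrier_vec n"
  shows "(A *\<^sub>v x) \<bullet>c x = complex_of_real (\<Sum>j<n. lam j * (cmod (x \<bullet>c f j))\<^sup>2)"
proof -
  have Ax: "(A *\<^sub>v x) $ r = (\<Sum>j<n. (x \<bullet>c f j) * lam j * f j $ r)" if r: "r < n" for r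
  proof -
    have "(A *\<^sub>v x) $ r = (\<Sum>s<n. A $$ (r,s) * (\<Sum>j<n. (x \<bullet>c f j) * f j $ s))"
      using A r x orthonormal_basis_expand[OF x] by (simp add: scalar_prod_def lessThan_atLeast0)
    also have "\<dots> = (\<Sum>s<n. \<Sum>j<n. (x \<bullet>c f j) * (A $$ (r,s) * f j $ s))"
      by (simp add: sum_distrib_left mult_ac)
    also have "\<dots> = (\<Sum>j<n. (x \<bullet>c f j) * (\<Sum>s<n. A $$ (r,s) * f j $ s))"
      by (subst sum.swap) (simp add: sum_distrib_left)
    also have "\<dots> = (\<Sum>j<n. (x \<bullet>c f j) * (A *\<^sub>v f j) $ r)"
      using A r
      by (intro sum.cong refl) (simp add: scalar_prod_def lessThan_atLeast0 carrier_vecD[OF onb_carrier])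
    also have "\<dots> = (\<Sum>j<n. (x \<bullet>c f j) * lam j * f j $ r)"
      using r by (intro sum.cong refl) (simp add: eig carrier_vecD[OF onb_carrier])
    finally show ?thesis .
  qed
  have "(A *\<^sub>v x) \<bullet>c x = (\<Sum>r<n. \<Sum>j<n. (x \<bullet>c f j) * lam j * (f j $ r * cnj (x $ r)))"
    unfolding cscalar_prod_expand[OF x] using Ax by (simp add: sum_distrib_left sum_distrib_right mult_ac)
  also have "\<dots> = (\<Sum>j<n. (x \<bullet>c f j) * lam j * (\<Sum>r<n. f j $ r * cnj (x $ r)))"
    by (subst sum.swap) (simp add: sum_distrib_left)
  also have "\<dots> = (\<Sum>j<n. (x \<bullet>c f j) * lam j * cnj (x \<bullet>c f j))"
    using cscalar_prod_conj_swap[OF onb_carrier x] by (simp add: cscalar_prod_expand[OF x])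
  also have "\<dots> = complex_of_real (\<Sum>j<n. lam j * (cmod (x \<bullet>c f j))\<^sup>2)"
    by (simp add: complex_norm_square algebra_simps flip: of_real_power)
  finally show ?thesis .
qed

end

section \<open>Small perturbations of orthonormal families\<close>

lemma cscalar_prod_lincomb_left:
  fixes x :: "nat \<Rightarrow> complex vec"
  assumes w: "w \<in> carrier_vec n"
  shows "vec n (\<lambda>r. \<Sum>l\<in>I. \<alpha> l * x l $ r) \<bullet>c w = (\<Sum>l\<in>I. \<alpha> l * (x l \<bullet>c w))"
proof -
  have "vec n (\<lambda>r. \<Sum>l\<in>I. \<alpha> l * x l $ r) \<bullet>c w = (\<Sum>r<n. \<Sum>l\<in>I. \<alpha> l * (x l $ r * cnj (w $ r)))"
    unfolding cscalar_prod_expand[OF w] by (simp add: sum_distrib_right mult.assoc)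
  also have "\<dots> = (\<Sum>l\<in>I. \<alpha> l * (x l \<bullet>c w))"
    by (subst sum.swap) (simp add: sum_distrib_left cscalar_prod_expand[OF w])
  finally show ?thesis .
qed

lemma cscalar_prod_lincomb_right:
  fixes x :: "nat \<Rightarrow> complex vec"
  assumes w: "w \<in> carrier_vec n" and x: "\<And>l. l \<in> I \<Longrightarrow> x l \<in> carrier_vec n"
  shows "w \<bullet>c vec n (\<lambda>r. \<Sum>l\<in>I. \<alpha> l * x l $ r) = (\<Sum>l\<in>I. cnj (\<alpha> l) * (w \<bullet>c x l))"
proof -
  have "w \<bullet>c vec n (\<lambda>r. \<Sum>l\<in>I. \<alpha> l * x l $ r) = cnj (\<Sum>l\<in>I. \<alpha> l * (x l \<bullet>c w))"
    using cscalar_prod_conj_swap[OF w, of "vec n (\<lambda>r. \<Sum>l\<in>I. \<alpha> l * x l $ r)"]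
    by (simp add: cscalar_prod_lincomb_left[OF w])
  also have "\<dots> = (\<Sum>l\<in>I. cnj (\<alpha> l) * (w \<bullet>c x l))"
    using cscalar_prod_conj_swap[OF w x] by simp
  finally show ?thesis .
qed

lemma sqnorm_orthonormal_lincomb:
  assumes I: "finite I" and x: "orthonormal_on n x I"
  shows "sqnorm (vec n (\<lambda>r. \<Sum>l\<in>I. \<alpha> l * x l $ r)) = (\<Sum>l\<in>I. (cmod (\<alpha> l))\<^sup>2)"
proof -
  note xC = orthonormal_on_carrier[OF x]
  define z where "z = vec n (\<lambda>r. \<Sum>l\<in>I. \<alpha> l * x l $ r)"
  have zC: "z \<in> carrier_vec n" unfolding z_def by simp
  have coeff: "z \<bullet>c x l = \<alpha> l" if l: "l \<in> I" for l
  proof -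
    have "z \<bullet>c x l = (\<Sum>k\<in>I. if k = l then \<alpha> k else 0)"
      unfolding z_def cscalar_prod_lincomb_left[OF xC[OF l]]
      by (intro sum.cong refl) (auto simp: orthonormal_on_cscalar_prod[OF x _ l])
    thus ?thesis using I l by simp
  qed
  have "complex_of_real (sqnorm z) = (\<Sum>l\<in>I. cnj (\<alpha> l) * (z \<bullet>c x l))"
    using cscalar_prod_lincomb_right[OF zC xC] by (simp flip: cscalar_prod_self add: z_def)
  also have "\<dots> = complex_of_real (\<Sum>l\<in>I. (cmod (\<alpha> l))\<^sup>2)"
    by (simp add: coeff complex_norm_square mult.commute flip: of_real_power)
  finally show ?thesis unfolding z_def of_real_eq_iff .
qed

lemma orthonormal_perturbation_coeffs_zero:
  fixes x y :: "nat \<Rightarrow> complex vec"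
  assumes I: "finite I" and x: "orthonormal_on n x I"
    and y: "\<And>l. l \<in> I \<Longrightarrow> y l \<in> carrier_vec n"
    and small: "(\<Sum>l\<in>I. sqnorm (y l)) < 1"
    and comb: "\<And>r. r < n \<Longrightarrow> (\<Sum>l\<in>I. \<alpha> l * x l $ r) = (\<Sum>l\<in>I. \<alpha> l * y l $ r)"
  shows "\<forall>l\<in>I. \<alpha> l = 0"
proof -
  define z where "z = vec n (\<lambda>r. \<Sum>l\<in>I. \<alpha> l * x l $ r)"
  define t where "t = sqrt (sqnorm z)"
  have zC: "z \<in> carrier_vec n" unfolding z_def by simp
  have z_y: "z = vec n (\<lambda>r. \<Sum>l\<in>I. \<alpha> l * y l $ r)" unfolding z_def using comb by (intro eq_vecI) auto
  have t_L2: "t = L2_set (\<lambda>l. cmod (\<alpha> l)) I"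
    unfolding t_def z_def sqnorm_orthonormal_lincomb[OF I x] L2_set_def ..
  \<comment> \<open>expanding \<open>\<langle>z, z\<rangle>\<close> along the perturbations \<open>y l\<close> instead gives \<open>t\<^sup>2 \<le> t\<^sup>2 \<cdot> \<surd>(\<Sum> \<parallel>y l\<parallel>\<^sup>2)\<close>\<close>
  have "z \<bullet>c z = (\<Sum>l\<in>I. cnj (\<alpha> l) * (z \<bullet>c y l))"
    by (subst (2) z_y) (rule cscalar_prod_lincomb_right[where x = y, OF zC y])
  hence "t * t = cmod (\<Sum>l\<in>I. cnj (\<alpha> l) * (z \<bullet>c y l))"
    by (metis t_def real_sqrt_mult_self norm_of_real cscalar_prod_self)
  also have "\<dots> \<le> (\<Sum>l\<in>I. cmod (\<alpha> l) * (t * sqrt (sqnorm (y l))))"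
    unfolding t_def
    by (rule order_trans[OF norm_sum sum_mono])
      (simp add: norm_mult mult_left_mono cscalar_prod_Cauchy_Schwarz[OF zC y])
  also have "\<dots> = t * (\<Sum>l\<in>I. \<bar>cmod (\<alpha> l)\<bar> * \<bar>sqrt (sqnorm (y l))\<bar>)"
    by (simp add: sum_distrib_left mult_ac sqnorm_nonneg)
  also have "\<dots> \<le> t * (L2_set (\<lambda>l. cmod (\<alpha> l)) I * L2_set (\<lambda>l. sqrt (sqnorm (y l))) I)"
    unfolding t_def by (intro mult_left_mono L2_set_mult_ineq) (simp add: sqnorm_nonneg)
  also have "\<dots> = t * t * sqrt (\<Sum>l\<in>I. sqnorm (y l))"
    by (simp add: t_L2 L2_set_def sqnorm_nonneg)
  finally have le: "t * t \<le> t * t * sqrt (\<Sum>l\<in>I. sqnorm (y l))" .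
  have "t = 0"
  proof (rule ccontr)
    assume "t \<noteq> 0"
    hence "0 < t * t" by (metis not_real_square_gt_zero)
    moreover have "sqrt (\<Sum>l\<in>I. sqnorm (y l)) < 1" using small by simp
    ultimately have "t * t * sqrt (\<Sum>l\<in>I. sqnorm (y l)) < t * t * 1"
      by (rule mult_strict_left_mono[rotated])
    thus False using le by simp
  qed
  hence "(\<Sum>l\<in>I. (cmod (\<alpha> l))\<^sup>2) = 0" using t_L2 by (simp add: L2_set_def)
  thus ?thesis using I by (simp add: sum_nonneg_eq_0_iff)
qed

lemma lin_indep_if_coeffs_zero:
  fixes u :: "nat \<Rightarrow> complex vec"
  assumes I: "finite I" and u: "\<And>l. l \<in> I \<Longrightarrow> u l \<in> carrier_vec n"
    and coeffs: "\<And>\<alpha>. \<forall>r<n. (\<Sum>l\<in>I. \<alpha> l * u l $ r) = 0 \<Longrightarrow> \<forall>l\<in>I. \<alpha> l = 0"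
  shows "inj_on u I" "\<not> clin_dep n (u ` I)"
proof -
  interpret V: vec_space "TYPE(complex)" n .
  show inj: "inj_on u I"
  proof (rule inj_onI, rule ccontr)
    fix l k assume l: "l \<in> I" and k: "k \<in> I" and ul: "u l = u k" and lk: "l \<noteq> k"
    define \<alpha> where "\<alpha> j = (if j = l then 1 else if j = k then -1 else (0::complex))" for j
    have "(\<Sum>j\<in>I. \<alpha> j * u j $ r) = 0" for r
    proof -
      have "(\<Sum>j\<in>I. \<alpha> j * u j $ r) = (\<Sum>j\<in>I. (if j = l then u l $ r else 0) - (if j = k then u k $ r else 0))"
        by (rule sum.cong, auto simp: \<alpha>_def lk)
      also have "\<dots> = 0" using I l k ul by (simp add: sum_subtractf)
      finally show ?thesis .
    qed
    hence "\<alpha> l = 0" using coeffs l by blast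
    thus False unfolding \<alpha>_def by simp
  qed
  show "\<not> clin_dep n (u ` I)"
  proof
    assume "clin_dep n (u ` I)"
    then obtain A a v where A: "finite A" "A \<subseteq> u ` I" "V.lincomb a A = 0\<^sub>v n" "v \<in> A" "a v \<noteq> 0"
      unfolding V.lin_dep_def by auto
    define J where "J = {l \<in> I. u l \<in> A}"
    have uJ: "u ` J = A" unfolding J_def using A(2) by auto
    have injJ: "inj_on u J" using inj unfolding J_def by (rule inj_on_subset, auto)
    have AC: "A \<subseteq> carrier_vec n" using A(2) u by auto
    define \<alpha> where "\<alpha> l = (if u l \<in> A then a (u l) else 0)" for l
    have "\<forall>r<n. (\<Sum>l\<in>I. \<alpha> l * u l $ r) = 0"
    proof (intro allI impI)
      fix r assume r: "r < n"
      have "(\<Sum>l\<in>I. \<alpha> l * u l $ r) = (\<Sum>l\<in>J. a (u l) * u l $ r)"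
        unfolding J_def \<alpha>_def by (rule sum.mono_neutral_cong_right, insert I, auto)
      also have "\<dots> = (\<Sum>w\<in>A. a w * w $ r)"
        by (subst uJ[symmetric], subst sum.reindex[OF injJ], simp)
      also have "\<dots> = V.lincomb a A $ r" by (rule V.lincomb_index[OF r AC, symmetric])
      also have "\<dots> = 0" using A(3) r by simp
      finally show "(\<Sum>l\<in>I. \<alpha> l * u l $ r) = 0" .
    qed
    hence "\<forall>l\<in>I. \<alpha> l = 0" by (rule coeffs)
    moreover obtain l where "l \<in> I" "u l = v" using A(2,4) by auto
    ultimately show False using A(4,5) unfolding \<alpha>_def by auto
  qed
qed

lemma orthonormal_perturbation_lin_indep:
  fixes x y :: "nat \<Rightarrow> complex vec"
  assumes I: "finite I" and x: "orthonormal_on n x I"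
    and y: "\<And>l. l \<in> I \<Longrightarrow> y l \<in> carrier_vec n"
    and small: "(\<Sum>l\<in>I. sqnorm (y l)) < 1"
  shows "inj_on (\<lambda>l. x l - y l) I" "\<not> clin_dep n ((\<lambda>l. x l - y l) ` I)"
proof -
  note xC = orthonormal_on_carrier[OF x]
  have coeffs: "\<forall>l\<in>I. \<alpha> l = 0" if comb: "\<forall>r<n. (\<Sum>l\<in>I. \<alpha> l * (x l - y l) $ r) = 0" for \<alpha>
  proof (rule orthonormal_perturbation_coeffs_zero[OF I x y small])
    fix r assume r: "r < n"
    have "(\<Sum>l\<in>I. \<alpha> l * (x l - y l) $ r) = (\<Sum>l\<in>I. \<alpha> l * x l $ r - \<alpha> l * y l $ r)"
      using r by (intro sum.cong refl) (simp add: carrier_vecD[OF y] right_diff_distrib)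
    also have "\<dots> = (\<Sum>l\<in>I. \<alpha> l * x l $ r) - (\<Sum>l\<in>I. \<alpha> l * y l $ r)"
      by (rule sum_subtractf)
    finally have "(\<Sum>l\<in>I. \<alpha> l * (x l - y l) $ r) = (\<Sum>l\<in>I. \<alpha> l * x l $ r) - (\<Sum>l\<in>I. \<alpha> l * y l $ r)" .
    thus "(\<Sum>l\<in>I. \<alpha> l * x l $ r) = (\<Sum>l\<in>I. \<alpha> l * y l $ r)" using comb r by simp
  qed
  show "inj_on (\<lambda>l. x l - y l) I" "\<not> clin_dep n ((\<lambda>l. x l - y l) ` I)"
    using lin_indep_if_coeffs_zero[where u = "\<lambda>l. x l - y l" and n = n, OF I _ coeffs] xC y by auto
qed

section \<open>Eigenvalue bounds for codes\<close>

context
  fixes n :: nat and lam :: "nat \<Rightarrow> real"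
  assumes pos: "\<And>k. k < n \<Longrightarrow> 0 < lam k"
    and gap: "\<And>k. Suc k < n \<Longrightarrow> lam (Suc k) < lam k / (real n)\<^sup>2"
begin

lemma tropical_gap: "j < k \<Longrightarrow> k < n \<Longrightarrow> lam k < lam j / (real n)\<^sup>2"
proof (induction k)
  case (Suc k)
  show ?case
  proof (cases "j = k")
    case False
    hence "lam k < lam j / (real n)\<^sup>2" using Suc by simp
    moreover have "lam k / (real n)\<^sup>2 \<le> lam k"
      using pos[of k] Suc.prems by (simp add: divide_le_eq)
    ultimately show ?thesis using gap[of k] Suc.prems by linarith
  qed (use gap Suc.prems in simp)
qed simp

lemma tropical_antitone:
  assumes "j \<le> k" "k < n"
  shows "lam k \<le> lam j"
proof (cases "j = k")
  case False
  hence "lam k < lam j / (real n)\<^sup>2" using tropical_gap assms by simp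
  also have "\<dots> \<le> lam j / 1"
    using pos[of j] assms by (intro divide_left_mono one_le_power) auto
  finally show ?thesis by simp
qed simp

end

context
  fixes n :: nat and f :: "nat \<Rightarrow> complex vec" and A :: "complex mat" and lam :: "nat \<Rightarrow> real"
  assumes onb: "orthonormal_on n f {..<n}" and A: "A \<in> carrier_mat n n"
    and eig: "\<And>j. j < n \<Longrightarrow> A *\<^sub>v f j = complex_of_real (lam j) \<cdot>\<^sub>v f j"
begin

lemma rayleigh_identity:
  assumes quad: "(A *\<^sub>v u) \<bullet>c u = complex_of_real \<epsilon> * (u \<bullet>c u)" and u: "u \<in> carrier_vec n"
  shows "\<epsilon> * sqnorm u = (\<Sum>k<n. lam k * (cmod (u \<bullet>c f k))\<^sup>2)"
proof -
  have "complex_of_real (\<epsilon> * sqnorm u) = complex_of_real (\<Sum>k<n. lam k * (cmod (u \<bullet>c f k))\<^sup>2)"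
    using quad quadratic_form_eigenbasis[OF onb A eig u] by (simp only: cscalar_prod_self of_real_mult)
  thus ?thesis by (simp only: of_real_eq_iff)
qed

lemma rayleigh_quotient_le_eigenvalue:
  assumes antitone: "\<And>j k. j \<le> k \<Longrightarrow> k < n \<Longrightarrow> lam k \<le> lam j"
    and C: "csubspace n C" and quad: "\<And>u. u \<in> C \<Longrightarrow> (A *\<^sub>v u) \<bullet>c u = complex_of_real \<epsilon> * (u \<bullet>c u)"
    and D: "D < cdim n C"
  shows "\<epsilon> \<le> lam D"
proof -
  have Dn: "D < n" using D cdim_le_dim[OF C] by simp
  have fC: "\<And>k. k < D \<Longrightarrow> f k \<in> carrier_vec n" using orthonormal_on_carrier[OF onb] Dn by simp
  \<comment> \<open>a nonzero vector of \<open>C\<close> orthogonal to the \<open>D\<close> eigenvectors of largest eigenvalue\<close>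
  obtain v where v: "v \<in> C" "v \<noteq> 0\<^sub>v n" and orth: "\<And>k. k < D \<Longrightarrow> v \<bullet>c f k = 0"
    using csubspace_ex_nonzero_orthogonal[where g = f, OF C fC D] by blast
  have vC: "v \<in> carrier_vec n" using v(1) csubspace_carrier[OF C] by auto
  have "\<epsilon> * sqnorm v = (\<Sum>k<n. lam k * (cmod (v \<bullet>c f k))\<^sup>2)"
    by (rule rayleigh_identity[OF quad[OF v(1)] vC])
  also have "\<dots> \<le> (\<Sum>k<n. lam D * (cmod (v \<bullet>c f k))\<^sup>2)"
  proof (rule sum_mono)
    fix k assume "k \<in> {..<n}"
    thus "lam k * (cmod (v \<bullet>c f k))\<^sup>2 \<le> lam D * (cmod (v \<bullet>c f k))\<^sup>2"
      using orth[of k] antitone[of D k] by (cases "k < D") (auto intro: mult_right_mono)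
  qed
  also have "\<dots> = lam D * sqnorm v"
    using sqnorm_orthonormal_basis[OF onb vC] by (simp add: sum_distrib_left)
  finally show ?thesis using sqnorm_pos[OF vC v(2)] by simp
qed

lemma eigvec_proj_sqnorm_bound:
  assumes nonneg: "\<And>k. k < n \<Longrightarrow> 0 \<le> lam k"
    and C: "csubspace n C" and quad: "\<And>u. u \<in> C \<Longrightarrow> (A *\<^sub>v u) \<bullet>c u = complex_of_real \<epsilon> * (u \<bullet>c u)"
    and j: "j < n"
  shows "lam j * (sqnorm (proj n C *\<^sub>v f j))\<^sup>2 \<le> \<epsilon> * sqnorm (proj n C *\<^sub>v f j)"
proof -
  let ?u = "proj n C *\<^sub>v f j"
  have fj: "f j \<in> carrier_vec n" using orthonormal_on_carrier[OF onb] j by simp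
  have u: "?u \<in> C" "?u \<in> carrier_vec n"
    using proj_mult_vec_mem[OF C fj] proj_mult_vec_carrier[OF C fj] by simp_all
  have "lam j * (sqnorm ?u)\<^sup>2 = lam j * (cmod (?u \<bullet>c f j))\<^sup>2"
    by (simp add: cscalar_prod_proj_self[OF C fj] sqnorm_nonneg)
  also have "\<dots> \<le> (\<Sum>k<n. lam k * (cmod (?u \<bullet>c f k))\<^sup>2)"
    by (rule member_le_sum) (use j nonneg in auto)
  also have "\<dots> = \<epsilon> * sqnorm ?u"
    by (rule rayleigh_identity[OF quad[OF u(1)] u(2), symmetric])
  finally show ?thesis .
qed

lemma tropical_code_eigvec_proj_small:
  assumes pos: "\<And>k. k < n \<Longrightarrow> 0 < lam k"
    and gap: "\<And>k. Suc k < n \<Longrightarrow> lam (Suc k) < lam k / (real n)\<^sup>2"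
    and C: "csubspace n C" and quad: "\<And>u. u \<in> C \<Longrightarrow> (A *\<^sub>v u) \<bullet>c u = complex_of_real \<epsilon> * (u \<bullet>c u)"
    and D: "D < cdim n C" and j: "j < D"
  shows "sqnorm (proj n C *\<^sub>v f j) < 1 / (real n)\<^sup>2"
proof -
  define N where "N = sqnorm (proj n C *\<^sub>v f j)"
  have Dn: "D < n" using D cdim_le_dim[OF C] by simp
  have "\<epsilon> \<le> lam D"
    by (rule rayleigh_quotient_le_eigenvalue[OF tropical_antitone[where lam = lam, OF pos gap] C quad D])
  also have "lam D < lam j / (real n)\<^sup>2" by (rule tropical_gap[where lam = lam, OF pos gap j Dn])
  finally have eps: "\<epsilon> < lam j / (real n)\<^sup>2" .
  have "\<And>k. k < n \<Longrightarrow> 0 \<le> lam k" using pos by (simp add: less_imp_le)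
  hence "lam j * N\<^sup>2 \<le> \<epsilon> * N"
    unfolding N_def using j Dn by (intro eigvec_proj_sqnorm_bound[OF _ C quad]) auto
  moreover have "0 < lam j" "0 \<le> N" using pos j Dn sqnorm_nonneg unfolding N_def by auto
  ultimately have "lam j * N \<le> \<epsilon> \<or> N = 0" by (auto simp: power2_eq_square)
  hence "lam j * N < lam j * (1 / (real n)\<^sup>2)" using eps \<open>0 < lam j\<close> Dn by auto
  thus ?thesis unfolding N_def using mult_less_cancel_left_pos[OF \<open>0 < lam j\<close>] by blast
qed

end

section \<open>Codes and colorings of induced subgraphs\<close>

lemma smult_mat_mult_vec:
  fixes A :: "'a :: comm_semiring_0 mat"
  assumes "A \<in> carrier_mat n n" "v \<in> carrier_vec n"
  shows "(a \<cdot>\<^sub>m A) *\<^sub>v v = a \<cdot>\<^sub>v (A *\<^sub>v v)"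
  using assms by (intro eq_vecI) (auto simp: scalar_prod_def sum_distrib_left mult.assoc)

lemma code_induced_quadratic_form:
  assumes S: "csubspace n S" and code: "is_code n S (induced_edges n S E) C"
    and M: "M \<in> E" "M \<in> carrier_mat n n"
  shows "\<exists>\<epsilon> :: real. \<forall>u\<in>C. (M *\<^sub>v u) \<bullet>c u = complex_of_real \<epsilon> * (u \<bullet>c u)"
proof -
  let ?PC = "proj n C" and ?PS = "proj n S"
  have C: "csubspace n C" and CS: "C \<subseteq> S" using code unfolding is_code_def by simp_all
  obtain \<epsilon> where eq: "?PC * (?PS * M * ?PS) * ?PC = complex_of_real \<epsilon> \<cdot>\<^sub>m ?PC"
    using code M(1) unfolding is_code_def induced_edges_def by blast
  have "(M *\<^sub>v u) \<bullet>c u = complex_of_real \<epsilon> * (u \<bullet>c u)" if u: "u \<in> C" for u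
  proof -
    have uC: "u \<in> carrier_vec n" using u csubspace_carrier[OF C] by auto
    have fixC: "?PC *\<^sub>v u = u" and fixS: "?PS *\<^sub>v u = u"
      using proj_fixes[OF C u] proj_fixes[OF S] u CS by auto
    have MuC: "M *\<^sub>v u \<in> carrier_vec n" using M(2) uC by simp
    have "?PC *\<^sub>v (?PS *\<^sub>v (M *\<^sub>v u)) = (?PC * (?PS * M * ?PS) * ?PC) *\<^sub>v u"
      using proj_carrier[OF C] proj_carrier[OF S] M(2) uC fixC fixS
      by (simp add: assoc_mult_mat_vec[of _ n n _ n])
    also have "\<dots> = complex_of_real \<epsilon> \<cdot>\<^sub>v u"
      unfolding eq using smult_mat_mult_vec[OF proj_carrier[OF C] uC] fixC by simp
    finally have compressed: "?PC *\<^sub>v (?PS *\<^sub>v (M *\<^sub>v u)) = complex_of_real \<epsilon> \<cdot>\<^sub>v u" .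
    have "(M *\<^sub>v u) \<bullet>c u = (?PC *\<^sub>v (?PS *\<^sub>v (M *\<^sub>v u))) \<bullet>c u"
      using proj_self_adjoint[OF C proj_mult_vec_carrier[OF S MuC] uC]
        proj_self_adjoint[OF S MuC uC] fixC fixS by simp
    thus ?thesis unfolding compressed by (simp add: cscalar_prod_smult_left[OF uC uC])
  qed
  thus ?thesis by blast
qed

lemma generator_mem_edge_space:
  assumes A: "\<forall>k\<in>{1..m}. A k \<in> carrier_mat n n" and i: "i \<in> {1..m}"
  shows "A i \<in> edge_space n m A"
proof -
  have Ai: "A i \<in> carrier_mat n n" using A i by blast
  have "lin_comb n m A (\<lambda>k. if k = i then 1 else 0) = A i"
  proof (rule eq_matI)
    fix r s assume "r < dim_row (A i)" "s < dim_col (A i)"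
    hence "r < n" "s < n" using Ai by auto
    moreover have "(\<Sum>k\<in>{1..m}. complex_of_real (if k = i then 1 else 0) * A k $$ (r, s))
        = (\<Sum>k\<in>{1..m}. if k = i then A i $$ (r, s) else 0)"
      by (rule sum.cong) auto
    ultimately show "lin_comb n m A (\<lambda>k. if k = i then 1 else 0) $$ (r, s) = A i $$ (r, s)"
      using i by (simp add: lin_comb_def)
  qed (use Ai in \<open>auto simp: lin_comb_def\<close>)
  thus ?thesis unfolding edge_space_def by (metis (mono_tags, lifting) mem_Collect_eq)
qed

lemma coloring_sqnorm_proj_sum:
  assumes S: "csubspace n S" and K: "is_coloring n S E K" and x: "x \<in> carrier_vec n"
  shows "sqnorm (proj n S *\<^sub>v x) = (\<Sum>C\<in>K. sqnorm (proj n C *\<^sub>v x))"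
proof -
  have C: "\<And>C. C \<in> K \<Longrightarrow> csubspace n C"
    and sum: "\<And>i j. i < n \<Longrightarrow> j < n \<Longrightarrow> (\<Sum>C\<in>K. proj n C $$ (i,j)) = proj n S $$ (i,j)"
    using K unfolding is_coloring_def is_code_def by auto
  have entry: "(proj n S *\<^sub>v x) $ r = (\<Sum>C\<in>K. (proj n C *\<^sub>v x) $ r)" if r: "r < n" for r
  proof -
    have "(proj n S *\<^sub>v x) $ r = (\<Sum>s<n. (\<Sum>C\<in>K. proj n C $$ (r,s)) * x $ s)"
      using proj_carrier[OF S] r x sum by (simp add: scalar_prod_def lessThan_atLeast0)
    also have "\<dots> = (\<Sum>C\<in>K. \<Sum>s<n. proj n C $$ (r,s) * x $ s)"
      by (subst sum.swap) (simp add: sum_distrib_right)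
    also have "\<dots> = (\<Sum>C\<in>K. (proj n C *\<^sub>v x) $ r)"
      using r by (intro sum.cong refl)
        (simp add: scalar_prod_def lessThan_atLeast0 carrier_matD[OF proj_carrier[OF C]] carrier_vecD[OF x])
    finally show ?thesis .
  qed
  have "complex_of_real (sqnorm (proj n S *\<^sub>v x)) = (\<Sum>r<n. (\<Sum>C\<in>K. (proj n C *\<^sub>v x) $ r) * cnj (x $ r))"
    unfolding cscalar_prod_proj_self[OF S x, symmetric] cscalar_prod_expand[OF x] by (simp add: entry)
  also have "\<dots> = (\<Sum>r<n. \<Sum>C\<in>K. (proj n C *\<^sub>v x) $ r * cnj (x $ r))"
    by (simp add: sum_distrib_right)
  also have "\<dots> = (\<Sum>C\<in>K. (proj n C *\<^sub>v x) \<bullet>c x)"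
    by (subst sum.swap) (simp add: cscalar_prod_expand[OF x])
  also have "\<dots> = complex_of_real (\<Sum>C\<in>K. sqnorm (proj n C *\<^sub>v x))"
    by (simp add: cscalar_prod_proj_self[OF C x])
  finally show ?thesis by (simp only: of_real_eq_iff)
qed

lemma orthonormal_on_unit_vec: "orthonormal_on n (unit_vec n) {..<n}"
  unfolding orthonormal_on_def by auto

lemma sum_sqnorm_proj_basis_ge_1:
  assumes onb: "orthonormal_on n f {..<n}" and C: "csubspace n C" and nonzero: "C \<noteq> {0\<^sub>v n}"
  shows "1 \<le> (\<Sum>j<n. sqnorm (proj n C *\<^sub>v f j))"
proof -
  note fC = orthonormal_on_carrier[OF onb]
  obtain u where u: "u \<in> C" "u \<noteq> 0\<^sub>v n" using nonzero csubspace_zero[OF C] by blast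
  have uC: "u \<in> carrier_vec n" using u(1) csubspace_carrier[OF C] by auto
  \<comment> \<open>\<open>\<langle>u, f j\<rangle> = \<langle>u, P\<^sub>C f j\<rangle>\<close>, then Parseval and Cauchy-Schwarz\<close>
  have "sqnorm u = (\<Sum>j<n. (cmod (u \<bullet>c (proj n C *\<^sub>v f j)))\<^sup>2)"
    using proj_self_adjoint[OF C uC fC] proj_fixes[OF C u(1)]
    by (simp add: sqnorm_orthonormal_basis[OF onb uC])
  also have "\<dots> \<le> (\<Sum>j<n. sqnorm u * sqnorm (proj n C *\<^sub>v f j))"
    using proj_mult_vec_carrier[OF C fC] by (intro sum_mono cscalar_prod_Cauchy_Schwarz_sq[OF uC]) auto
  finally have "sqnorm u * 1 \<le> sqnorm u * (\<Sum>j<n. sqnorm (proj n C *\<^sub>v f j))"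
    by (simp add: sum_distrib_left)
  thus ?thesis using sqnorm_pos[OF uC u(2)] by (simp only: mult_le_cancel_left_pos)
qed

lemma coloring_card_le:
  assumes S: "csubspace n S" and K: "is_coloring n S E K"
    and nonzero: "\<And>C. C \<in> K \<Longrightarrow> C \<noteq> {0\<^sub>v n}"
  shows "card K \<le> n"
proof -
  have C: "\<And>C. C \<in> K \<Longrightarrow> csubspace n C"
    using K unfolding is_coloring_def is_code_def by auto
  let ?e = "unit_vec n"
  have "real (card K) \<le> (\<Sum>C\<in>K. \<Sum>j<n. sqnorm (proj n C *\<^sub>v ?e j))"
    using sum_sqnorm_proj_basis_ge_1[OF orthonormal_on_unit_vec C nonzero]
    by (metis (no_types, lifting) card_eq_sum of_nat_sum of_nat_1 sum_mono)
  also have "\<dots> = (\<Sum>j<n. sqnorm (proj n S *\<^sub>v ?e j))"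
    by (subst sum.swap) (simp add: coloring_sqnorm_proj_sum[OF S K])
  also have "\<dots> \<le> (\<Sum>j<n. sqnorm (?e j))"
    by (intro sum_mono sqnorm_proj_le[OF S]) simp
  also have "\<dots> = (\<Sum>j<n. 1)"
    using orthonormal_on_cscalar_prod[OF orthonormal_on_unit_vec]
    by (intro sum.cong refl) (metis cscalar_prod_self of_real_eq_1_iff)
  also have "\<dots> = real n" by simp
  finally show ?thesis by simp
qed

section \<open>Tropical eigenbases\<close>

locale tropical_eigenbasis =
  fixes n m :: nat and A :: "nat \<Rightarrow> complex mat"
    and b :: "nat \<Rightarrow> complex vec" and \<pi> :: "nat \<Rightarrow> nat \<Rightarrow> nat" and lam :: "nat \<Rightarrow> nat \<Rightarrow> real"
    and e :: "nat \<Rightarrow> nat"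
  assumes n_ge_2: "2 \<le> n" and m_pos: "1 \<le> m"
    and A_carrier: "\<forall>k\<in>{1..m}. A k \<in> carrier_mat n n"
    and b_orthonormal: "orthonormal_on n b {1..n}"
    and \<pi>_bij: "\<And>i. i \<in> {1..m} \<Longrightarrow> bij_betw (\<pi> i) {1..n} {1..n}"
    and eigvec: "\<And>i j. i \<in> {1..m} \<Longrightarrow> j \<in> {1..n} \<Longrightarrow>
      A i *\<^sub>v b (\<pi> i j) = complex_of_real (lam i j) \<cdot>\<^sub>v b (\<pi> i j)"
    and tropical: "\<And>i j. i \<in> {1..m} \<Longrightarrow> 1 \<le> j \<Longrightarrow> j < n \<Longrightarrow>
      0 < lam i (j + 1) \<and> lam i (j + 1) < lam i j / (real n)\<^sup>2"
    and e_bij: "bij_betw e {1..n} {1..n}"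
    and e_enum: "\<And>l. l \<in> {1..n} \<Longrightarrow> \<exists>i\<in>{1..m}. e l = \<pi> i (nat \<lceil>real l / real m\<rceil>)"

lemma is_Q_tropical_eigenbasis:
  assumes Q: "is_Q n m A" and "2 \<le> n" "1 \<le> m"
  shows "\<exists>b \<pi> lam e. tropical_eigenbasis n m A b \<pi> lam e"
proof -
  from Q obtain b \<pi> lam e where
    "\<forall>k\<in>{1..m}. A k \<in> carrier_mat n n"
    "\<forall>j\<in>{1..n}. b j \<in> carrier_vec n"
    "\<forall>j\<in>{1..n}. \<forall>l\<in>{1..n}. b j \<bullet>c b l = (if j = l then 1 else 0)"
    "\<forall>i\<in>{1..m}. bij_betw (\<pi> i) {1..n} {1..n}"
    "\<forall>i\<in>{1..m}. \<forall>j\<in>{1..n}. A i *\<^sub>v b (\<pi> i j) = complex_of_real (lam i j) \<cdot>\<^sub>v b (\<pi> i j)"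
    "\<forall>i\<in>{1..m}. \<forall>j. 1 \<le> j \<and> j < n \<longrightarrow> 0 < lam i (j+1) \<and> lam i (j+1) < lam i j / (real n)\<^sup>2"
    "bij_betw e {1..n} {1..n}"
    "\<forall>l\<in>{1..n}. \<exists>i\<in>{1..m}. e l = \<pi> i (nat \<lceil>real l / real m\<rceil>)"
    unfolding is_Q_def by (elim conjE exE) blast
  hence "tropical_eigenbasis n m A b \<pi> lam e"
    using assms(2,3) by unfold_locales (simp_all add: orthonormal_on_def)
  thus ?thesis by blast
qed

context tropical_eigenbasis
begin

lemma eigenbasis_of_generator:
  assumes i: "i \<in> {1..m}"
  shows "orthonormal_on n (\<lambda>k. b (\<pi> i (Suc k))) {..<n}"
    and "\<And>k. k < n \<Longrightarrow> A i *\<^sub>v b (\<pi> i (Suc k)) = complex_of_real (lam i (Suc k)) \<cdot>\<^sub>v b (\<pi> i (Suc k))"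
    and "\<And>k. k < n \<Longrightarrow> 0 < lam i (Suc k)"
    and "\<And>k. Suc k < n \<Longrightarrow> lam i (Suc (Suc k)) < lam i (Suc k) / (real n)\<^sup>2"
proof -
  have inj: "inj_on (\<pi> i) {1..n}" by (rule bij_betw_imp_inj_on[OF \<pi>_bij[OF i]])
  have "inj_on (\<lambda>k. \<pi> i (Suc k)) {..<n}"
  proof (rule inj_onI)
    fix k k' assume "k \<in> {..<n}" "k' \<in> {..<n}" "\<pi> i (Suc k) = \<pi> i (Suc k')"
    thus "k = k'" using inj_onD[OF inj, of "Suc k" "Suc k'"] by simp
  qed
  moreover have "(\<lambda>k. \<pi> i (Suc k)) ` {..<n} \<subseteq> {1..n}"
    using bij_betwE[OF \<pi>_bij[OF i]] by auto
  ultimately show "orthonormal_on n (\<lambda>k. b (\<pi> i (Suc k))) {..<n}"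
    by (rule orthonormal_on_reindex[OF b_orthonormal])
  show "A i *\<^sub>v b (\<pi> i (Suc k)) = complex_of_real (lam i (Suc k)) \<cdot>\<^sub>v b (\<pi> i (Suc k))" if "k < n" for k
    using eigvec[OF i, of "Suc k"] that by simp
  show "lam i (Suc (Suc k)) < lam i (Suc k) / (real n)\<^sup>2" if "Suc k < n" for k
    using tropical[OF i, of "Suc k"] that by simp
  \<comment> \<open>the largest eigenvalue is positive because it exceeds the second one, which is\<close>
  show "0 < lam i (Suc k)" if "k < n" for k
  proof (cases k)
    case 0
    from tropical[OF i, of 1] n_ge_2 have "0 < lam i (1 + 1)" "lam i (1 + 1) < lam i 1 / (real n)\<^sup>2"
      by auto
    hence "0 < lam i 1 / (real n)\<^sup>2" by linarith
    thus ?thesis using 0 by (simp add: zero_less_divide_iff)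
  next
    case (Suc k')
    thus ?thesis using tropical[OF i, of k] that by simp
  qed
qed

lemma code_eigvec_proj_small:
  assumes S: "csubspace n S" and code: "is_code n S (induced_edges n S (edge_space n m A)) C"
    and i: "i \<in> {1..m}" and D: "D < cdim n C" and j: "j \<in> {1..D}"
  shows "sqnorm (proj n C *\<^sub>v b (\<pi> i j)) < 1 / (real n)\<^sup>2"
proof -
  have Ai: "A i \<in> carrier_mat n n" using A_carrier i by blast
  have C: "csubspace n C" using code unfolding is_code_def by simp
  obtain \<epsilon> where quad: "\<And>u. u \<in> C \<Longrightarrow> (A i *\<^sub>v u) \<bullet>c u = complex_of_real \<epsilon> * (u \<bullet>c u)"
    using code_induced_quadratic_form[OF S code generator_mem_edge_space[OF A_carrier i] Ai] by blast
  note basis = eigenbasis_of_generator[OF i]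
  have "sqnorm (proj n C *\<^sub>v b (\<pi> i (Suc (j - 1)))) < 1 / (real n)\<^sup>2"
    by (rule tropical_code_eigvec_proj_small[where f = "\<lambda>k. b (\<pi> i (Suc k))" and lam = "\<lambda>k. lam i (Suc k)",
          OF basis(1) Ai basis(2-4) C quad D]) (use j in auto)
  thus ?thesis using j by simp
qed

lemma enumerated_eigvec_proj_small:
  assumes S: "csubspace n S" and K: "is_coloring n S (induced_edges n S (edge_space n m A)) K"
    and big: "\<And>C. C \<in> K \<Longrightarrow> D < cdim n C"
    and l: "l \<in> {1..n}" "\<lceil>real l / real m\<rceil> \<le> int D"
  shows "sqnorm (proj n S *\<^sub>v b (e l)) < 1 / real n"
proof -
  obtain i where i: "i \<in> {1..m}" and el: "e l = \<pi> i (nat \<lceil>real l / real m\<rceil>)"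
    using e_enum[OF l(1)] by blast
  define j where "j = \<lceil>real l / real m\<rceil>"
  have "0 < real l / real m" using l(1) m_pos by simp
  hence "1 \<le> j" unfolding j_def by (simp add: le_ceiling_iff)
  hence j: "nat j \<in> {1..D}" using l(2) unfolding j_def[symmetric] by auto
  have code: "\<And>C. C \<in> K \<Longrightarrow> is_code n S (induced_edges n S (edge_space n m A)) C"
    using K unfolding is_coloring_def by simp
  have "b (e l) \<in> carrier_vec n"
    using orthonormal_on_carrier[OF b_orthonormal] bij_betwE[OF e_bij] l(1) by blast
  hence split: "sqnorm (proj n S *\<^sub>v b (e l)) = (\<Sum>C\<in>K. sqnorm (proj n C *\<^sub>v b (e l)))"
    by (rule coloring_sqnorm_proj_sum[OF S K])
  show ?thesis
  proof (cases "K = {}")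
    case False
    have "finite K" using K unfolding is_coloring_def by simp
    hence "(\<Sum>C\<in>K. sqnorm (proj n C *\<^sub>v b (e l))) < (\<Sum>C\<in>K. 1 / (real n)\<^sup>2)"
      unfolding el j_def[symmetric] using code_eigvec_proj_small[OF S code i big j] False
      by (intro sum_strict_mono)
    also have "\<dots> \<le> real n / (real n)\<^sup>2"
    proof -
      have "\<And>C. C \<in> K \<Longrightarrow> C \<noteq> {0\<^sub>v n}" using big cdim_zero_space by force
      hence "card K \<le> n" by (rule coloring_card_le[OF S K])
      thus ?thesis by (simp add: divide_right_mono)
    qed
    also have "\<dots> = 1 / real n" by (simp add: power2_eq_square)
    finally show ?thesis using split by simp
  qed (use split n_ge_2 in simp)
qed

theorem coloring_has_small_code:
  assumes S: "csubspace n S" "S \<noteq> {0\<^sub>v n}"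
    and K: "is_coloring n S (induced_edges n S (edge_space n m A)) K"
  shows "\<exists>C\<in>K. cdim n C \<le> nat \<lceil>(real (cdim n (perp n S)) + 1) / real m\<rceil>"
proof (rule ccontr)
  define p where "p = cdim n (perp n S)"
  define D where "D = nat \<lceil>(real p + 1) / real m\<rceil>"
  define I where "I = {1..p + 1}"
  define x where "x l = b (e l)" for l
  assume "\<not> ?thesis"
  hence big: "\<And>C. C \<in> K \<Longrightarrow> D < cdim n C" unfolding D_def p_def by force
  have I: "I \<subseteq> {1..n}" using cdim_perp_less[OF S] unfolding I_def p_def by auto
  have small: "sqnorm (proj n S *\<^sub>v x l) < 1 / real n" if l: "l \<in> I" for l
    unfolding x_def
  proof (rule enumerated_eigvec_proj_small[OF S(1) K big])
    show "l \<in> {1..n}" using I l by auto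
    have "\<lceil>real l / real m\<rceil> \<le> \<lceil>(real p + 1) / real m\<rceil>"
      using l m_pos unfolding I_def by (intro ceiling_mono divide_right_mono) auto
    thus "\<lceil>real l / real m\<rceil> \<le> int D" unfolding D_def by linarith
  qed
  have "(\<Sum>l\<in>I. sqnorm (proj n S *\<^sub>v x l)) < (\<Sum>l\<in>I. 1 / real n)"
    using small by (intro sum_strict_mono) (auto simp: I_def)
  also have "\<dots> \<le> 1" using I n_ge_2 card_mono[OF _ I] by (simp add: I_def)
  finally have "(\<Sum>l\<in>I. sqnorm (proj n S *\<^sub>v x l)) < 1" .
  moreover have "orthonormal_on n x I"
    unfolding x_def using bij_betw_imp_inj_on[OF e_bij] bij_betwE[OF e_bij] I
    by (intro orthonormal_on_reindex[OF b_orthonormal]) (auto intro: inj_on_subset)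
  ultimately have inj: "inj_on (\<lambda>l. x l - proj n S *\<^sub>v x l) I"
    and indep: "\<not> clin_dep n ((\<lambda>l. x l - proj n S *\<^sub>v x l) ` I)"
    using orthonormal_perturbation_lin_indep[of I n x "\<lambda>l. proj n S *\<^sub>v x l"]
      proj_mult_vec_carrier[OF S(1)] orthonormal_on_carrier by (auto simp: I_def)
  have "(\<lambda>l. x l - proj n S *\<^sub>v x l) ` I \<subseteq> perp n S"
    using proj_residual_mem_perp[OF S(1)] orthonormal_on_carrier[OF \<open>orthonormal_on n x I\<close>] by auto
  hence "card ((\<lambda>l. x l - proj n S *\<^sub>v x l) ` I) \<le> p"
    unfolding p_def
    by (rule card_le_cdim_if_lin_indep(2)[OF perp_csubspace[OF csubspace_carrier[OF S(1)]] _ indep])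
  thus False using card_image[OF inj] by (simp add: I_def)
qed

end

theorem lemma6:
  fixes n m :: nat and A :: "nat \<Rightarrow> complex mat"
    and S :: "complex vec set" and K :: "complex vec set set"
  assumes "2 \<le> n" and "1 \<le> m" and "m \<le> n - 1"
    and "is_Q n m A"
    and "csubspace n S" and "S \<noteq> {0\<^sub>v n}"
    and "is_coloring n S (induced_edges n S (edge_space n m A)) K"
  shows "\<exists>C\<in>K. cdim n C \<le> nat \<lceil>(real (cdim n (perp n S)) + 1) / real m\<rceil>"
proof -
  obtain b \<pi> lam e where "tropical_eigenbasis n m A b \<pi> lam e"
    using is_Q_tropical_eigenbasis[OF assms(4,1,2)] by blast
  then interpret tropical_eigenbasis n m A b \<pi> lam e .
  show ?thesis by (rule coloring_has_small_code[OF assms(5-7)])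
qed

end
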